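(* For all constants $0<\alpha\le\beta$ there is a constant $c>0$ such that the following holds. Let $k\le n$ be positive integers and let $h$ be an integer with $\alpha\log(n/k+1)\le h\le\beta\log(n/k+1)$, $h\ge2$ and $h\mid k$; set $\ell=k/h$. Suppose that in the $\ell$-variant cup game on $n$ cups some play of $T$ rounds ends with at least $k$ cups having fill at least $h\ell$. Then $T\ge c\,h\,\ell^3$.
   Context: The $\ell$-variant cup game on $n$ cups ($\ell$ a positive integer): $n$ cups with integer fills, all initially $0$. In each round the player chooses an integer $k'\ge0$ and an integer $q\ge1$ such that at least $2q$ cups have fill exactly $k'$. Among these cups, exactly $q$ are raised to $k'+1$; if $k'$ is a multiple of $\ell$ the other $q$ stay at $k'$, and otherwise $q$ other such cups are lowered to $k'-1$. (A cup that has reached a multiple of $\ell$ never goes below it.) *)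

theory Defs
  imports Complex_Main
begin

text \<open>Configurations of the cup game on n cups: cups are 0..n-1, fills are
  natural numbers (fills never become negative since 0 is a multiple of l).\<close>

definition cup_step :: "nat \<Rightarrow> nat \<Rightarrow> (nat \<Rightarrow> nat) \<Rightarrow> (nat \<Rightarrow> nat) \<Rightarrow> bool" where
  "cup_step l n f g \<longleftrightarrow>
     (\<exists>k' q U D. q \<ge> 1 \<and> U \<subseteq> {i. i < n \<and> f i = k'} \<and> D \<subseteq> {i. i < n \<and> f i = k'}
        \<and> U \<inter> D = {} \<and> card U = q \<and> card D = q
        \<and> (\<forall>i. g i = (if i \<in> U then k' + 1
                      else if i \<in> D then (if l dvd k' then k' else k' - 1)
                      else f i)))"

definition cup_play :: "nat \<Rightarrow> nat \<Rightarrow> nat \<Rightarrow> (nat \<Rightarrow> nat \<Rightarrow> nat) \<Rightarrow> bool" where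
  "cup_play l n T fs \<longleftrightarrow> fs 0 = (\<lambda>_. 0) \<and> (\<forall>t < T. cup_step l n (fs t) (fs (Suc t)))"

end

(* Fix a band j, i.e. fills between j l and (j + 1) l, and let S be the cups whose final fill
   is at least j l; since fills never drop below a multiple of l, S contains every cup that
   ever reaches j l. Give each cup a in S the height x_a = min l (fill - j l) and consider
     Phi = sum_a x_a (x_a - 1) + (1 / 2s) sum_{z<l} #{a. x_a <= z}^2.
   A round played outside the band leaves the heights unchanged, and one played inside raises
   Phi by at most s: moving q cups up and q cups down from height y adds 2q to the first sum,
   but since these 2q cups lie between the counts at y - 1 and y it removes at least q^2/s
   from the second. Comparing the initial and final values of Phi gives
     A_{j+1} l^2 <= A_j l + l A_j^2 / 2s + s R_j,
   where A_j counts the cups ending with fill at least j l and R_j the rounds played in band j.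
   Choosing s = A_j / (rho l) yields A_{j+1} <= rho A_j exp (R_j / (rho^2 l^3)) when rho l >= 2.
   Chaining the h bands and using sum_j R_j <= T gives k <= n rho^h exp (T / (rho^2 l^3)),
   which for rho = exp (-1/alpha - 1) and n <= k exp (h/alpha) forces T >= rho^2 h l^3;
   when rho l < 2 the trivial bound T >= h l suffices. *)

theory Submission
  imports Defs
begin

definition round_update :: "nat \<Rightarrow> nat set \<Rightarrow> nat set \<Rightarrow> nat \<Rightarrow> (nat \<Rightarrow> nat) \<Rightarrow> nat \<Rightarrow> nat" where
  "round_update l U D k' f i = (if i \<in> U then k' + 1 else if i \<in> D then (if l dvd k' then k' else k' - 1) else f i)"

definition cup_step_at :: "nat \<Rightarrow> nat \<Rightarrow> nat \<Rightarrow> (nat \<Rightarrow> nat) \<Rightarrow> (nat \<Rightarrow> nat) \<Rightarrow> bool" where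
  "cup_step_at l n k' f g \<longleftrightarrow> (\<exists>U D. U \<subseteq> {i. i < n \<and> f i = k'} \<and> D \<subseteq> {i. i < n \<and> f i = k'}
     \<and> U \<inter> D = {} \<and> card U = card D
     \<and> (\<forall>i. g i = round_update l U D k' f i))"

lemma cup_step_imp_cup_step_at:
  assumes "cup_step l n f g"
  shows "\<exists>k'. cup_step_at l n k' f g"
proof -
  obtain k' q U D where "U \<subseteq> {i. i < n \<and> f i = k'}" "D \<subseteq> {i. i < n \<and> f i = k'}"
    "U \<inter> D = {}" "card U = q" "card D = q"
    "\<forall>i. g i = (if i \<in> U then k' + 1 else if i \<in> D then (if l dvd k' then k' else k' - 1) else f i)"
    using assms unfolding cup_step_def by blast
  then have "cup_step_at l n k' f g"
    unfolding cup_step_at_def round_update_def by (intro exI[of _ U] exI[of _ D]) simp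
  then show ?thesis ..
qed

lemma cup_step_atE:
  assumes "cup_step_at l n k' f g"
  obtains U D where "U \<subseteq> {i. i < n \<and> f i = k'}" "D \<subseteq> {i. i < n \<and> f i = k'}"
    "U \<inter> D = {}" "card U = card D"
    "\<And>i. g i = round_update l U D k' f i"
  using assms unfolding cup_step_at_def by blast

lemma cup_step_at_le_Suc:
  assumes "cup_step_at l n k' f g" "\<forall>i. f i \<le> t"
  shows "g i \<le> Suc t"
proof -
  obtain U D where U: "U \<subseteq> {i. i < n \<and> f i = k'}" and D: "D \<subseteq> {i. i < n \<and> f i = k'}"
    and g: "\<And>i. g i = round_update l U D k' f i"
    by (rule cup_step_atE[OF assms(1)]) blast
  have "f i \<le> t"
    using assms(2) by blast
  moreover have "f i = k'" if "i \<in> U \<union> D"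
    using that U D by blast
  ultimately show ?thesis
    unfolding g round_update_def by auto
qed

lemma cup_step_at_multiple_le:
  assumes "cup_step_at l n k' f g" "m * l \<le> f i"
  shows "m * l \<le> g i"
proof -
  obtain U D where U: "U \<subseteq> {i. i < n \<and> f i = k'}" and D: "D \<subseteq> {i. i < n \<and> f i = k'}"
    and g: "\<And>i. g i = round_update l U D k' f i"
    by (rule cup_step_atE[OF assms(1)]) blast
  have "m * l \<noteq> k'" if "\<not> l dvd k'"
    using that by auto
  moreover have "f i = k'" if "i \<in> U \<union> D"
    using that U D by blast
  ultimately show ?thesis
    unfolding g round_update_def using assms(2) by auto
qed

lemma cup_play_step: "cup_play l n T fs \<Longrightarrow> t < T \<Longrightarrow> \<exists>k'. cup_step_at l n k' (fs t) (fs (Suc t))"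
  unfolding cup_play_def using cup_step_imp_cup_step_at by blast

lemma cup_play_fill_le: "cup_play l n T fs \<Longrightarrow> t \<le> T \<Longrightarrow> fs t i \<le> t"
proof (induction t arbitrary: i)
  case 0
  then show ?case by (simp add: cup_play_def)
next
  case (Suc t)
  then obtain k' where "cup_step_at l n k' (fs t) (fs (Suc t))"
    using cup_play_step by (metis Suc_le_lessD)
  moreover have "\<forall>i. fs t i \<le> t"
    using Suc by simp
  ultimately show ?case
    by (rule cup_step_at_le_Suc)
qed

lemma cup_play_multiple_le:
  assumes "cup_play l n T fs" "t \<le> t'" "t' \<le> T" "m * l \<le> fs t i"
  shows "m * l \<le> fs t' i"
  using assms(2,3)
proof (induction t' rule: dec_induct)
  case base
  show ?case using assms(4) .
next
  case (step t')
  then obtain k' where "cup_step_at l n k' (fs t') (fs (Suc t'))"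
    using cup_play_step[OF assms(1)] by (metis Suc_le_lessD)
  then show ?case
    using step by (simp add: cup_step_at_multiple_le)
qed

definition band_height :: "nat \<Rightarrow> nat \<Rightarrow> (nat \<Rightarrow> nat) \<Rightarrow> nat \<Rightarrow> nat" where
  "band_height l j f a = min l (f a - j * l)"

text \<open>At \<open>y = 0\<close> the truncated \<open>y - 1 = 0\<close> is the floor at the multiple \<open>j * l\<close>
  that cups moved down cannot pass.\<close>

definition move_heights :: "nat set \<Rightarrow> nat set \<Rightarrow> nat \<Rightarrow> (nat \<Rightarrow> nat) \<Rightarrow> nat \<Rightarrow> nat" where
  "move_heights U D y x a = (if a \<in> U then Suc y else if a \<in> D then y - 1 else x a)"

lemma multiple_in_band_eq:
  assumes "l dvd k'" "j * l \<le> k'" "k' < Suc j * l"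
  shows "k' = j * l"
proof -
  have "k' div l = j"
    by (rule div_nat_eqI) (use assms(2,3) in \<open>simp_all add: mult.commute\<close>)
  then show ?thesis
    using dvd_div_mult_self[OF assms(1)] by simp
qed

lemma band_height_step_in_band:
  assumes "cup_step_at l n k' f g" "j * l \<le> k'" "k' < Suc j * l"
  obtains U D where "U \<subseteq> {i. i < n \<and> f i = k'}" "D \<subseteq> {i. i < n \<and> f i = k'}"
    "U \<inter> D = {}" "card U = card D"
    "band_height l j g = move_heights U D (k' - j * l) (band_height l j f)"
proof -
  obtain U D where U: "U \<subseteq> {i. i < n \<and> f i = k'}" and D: "D \<subseteq> {i. i < n \<and> f i = k'}"
    and UD: "U \<inter> D = {}" "card U = card D"
    and g: "\<And>i. g i = round_update l U D k' f i"
    by (rule cup_step_atE[OF assms(1)]) blast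
  have "band_height l j g = move_heights U D (k' - j * l) (band_height l j f)"
  proof
    fix a
    consider "a \<in> U" | "a \<notin> U" "a \<in> D" "l dvd k'" | "a \<notin> U" "a \<in> D" "\<not> l dvd k'"
      | "a \<notin> U" "a \<notin> D"
      by blast
    then show "band_height l j g a = move_heights U D (k' - j * l) (band_height l j f) a"
    proof cases
      case 1
      have "g a = Suc k'"
        using 1 by (simp add: g round_update_def)
      then show ?thesis
        using 1 assms(2,3) by (simp add: band_height_def move_heights_def)
    next
      case 2
      then have "g a = j * l" "k' = j * l"
        using multiple_in_band_eq[OF _ assms(2,3)] by (simp_all add: g round_update_def)
      then show ?thesis
        using 2 by (simp add: band_height_def move_heights_def)
    next
      case 3
      then have "g a = k' - 1" "k' \<noteq> j * l"
        by (auto simp: g round_update_def)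
      then show ?thesis
        using 3 assms(2,3) by (simp add: band_height_def move_heights_def)
    qed (simp add: band_height_def move_heights_def g round_update_def)
  qed
  with U D UD show ?thesis
    by (rule that)
qed

lemma band_height_step_off_band:
  assumes "cup_step_at l n k' f g" "\<not> (j * l \<le> k' \<and> k' < Suc j * l)"
  shows "band_height l j g = band_height l j f"
proof
  fix a
  obtain U D where U: "U \<subseteq> {i. i < n \<and> f i = k'}" and D: "D \<subseteq> {i. i < n \<and> f i = k'}"
    and g: "\<And>i. g i = round_update l U D k' f i"
    by (rule cup_step_atE[OF assms(1)]) blast
  consider "a \<notin> U \<union> D" | "a \<in> U \<union> D" "k' < j * l" | "a \<in> U \<union> D" "Suc j * l \<le> k'"
    using assms(2) by fastforce
  then show "band_height l j g a = band_height l j f a"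
  proof cases
    case 1
    then show ?thesis by (simp add: band_height_def g round_update_def)
  next
    case 2
    then have "f a = k'" "g a \<le> j * l"
      using U D by (auto simp: g round_update_def)
    then show ?thesis
      using 2 by (simp add: band_height_def)
  next
    case 3
    then have "f a = k'"
      using U D by auto
    then have "Suc j * l \<le> g a"
      using cup_step_at_multiple_le[OF assms(1), of "Suc j" a] 3 by simp
    then show ?thesis
      using 3 \<open>f a = k'\<close> by (simp add: band_height_def)
  qed
qed

definition height_count :: "nat set \<Rightarrow> (nat \<Rightarrow> nat) \<Rightarrow> nat \<Rightarrow> nat" where
  "height_count S x z = card {a \<in> S. x a \<le> z}"

definition height_potential :: "nat \<Rightarrow> nat set \<Rightarrow> real \<Rightarrow> (nat \<Rightarrow> nat) \<Rightarrow> real" where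
  "height_potential l S s x =
     (\<Sum>a\<in>S. real (x a) * (real (x a) - 1)) + (\<Sum>z<l. real (height_count S x z) ^ 2) / (2 * s)"

lemma height_potential_move_bottom:
  assumes "finite S" "0 \<le> s" "\<forall>a \<in> U \<union> D. x a = 0"
  shows "height_potential l S s (move_heights U D 0 x) \<le> height_potential l S s x"
proof -
  let ?x' = "move_heights U D 0 x"
  have "real (?x' a) * (real (?x' a) - 1) = real (x a) * (real (x a) - 1)" for a
    using assms(3) by (auto simp: move_heights_def)
  moreover have "height_count S ?x' z \<le> height_count S x z" for z
    unfolding height_count_def using assms(1,3) by (intro card_mono) (auto simp: move_heights_def)
  then have "(\<Sum>z<l. real (height_count S ?x' z) ^ 2) \<le> (\<Sum>z<l. real (height_count S x z) ^ 2)"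
    by (intro sum_mono power_mono) auto
  ultimately show ?thesis
    unfolding height_potential_def using assms(2) by (simp add: divide_right_mono)
qed

lemma height_count_move_interior:
  assumes "finite S" "U \<subseteq> S" "D \<subseteq> S" "U \<inter> D = {}" "\<forall>a \<in> U \<union> D. x a = y" "0 < y"
  shows "height_count S (move_heights U D y x) y = height_count S x y - card U"
    and "height_count S (move_heights U D y x) (y - 1) = height_count S x (y - 1) + card D"
    and "z \<noteq> y \<Longrightarrow> z \<noteq> y - 1 \<Longrightarrow> height_count S (move_heights U D y x) z = height_count S x z"
    and "height_count S x (y - 1) + card U + card D \<le> height_count S x y"
proof -
  let ?x' = "move_heights U D y x"
  have fin: "finite U" "finite D" "finite {a \<in> S. x a \<le> y - 1}"
    using assms(1-3) finite_subset by auto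
  have "{a \<in> S. ?x' a \<le> y} = {a \<in> S. x a \<le> y} - U"
    using assms(4,5) by (auto simp: move_heights_def)
  moreover have "U \<subseteq> {a \<in> S. x a \<le> y}"
    using assms(2,5) by auto
  ultimately show "height_count S ?x' y = height_count S x y - card U"
    unfolding height_count_def by (simp add: card_Diff_subset fin)
  have "{a \<in> S. ?x' a \<le> y - 1} = {a \<in> S. x a \<le> y - 1} \<union> D"
    using assms(3-6) by (auto simp: move_heights_def)
  moreover have "{a \<in> S. x a \<le> y - 1} \<inter> D = {}"
    using assms(5,6) by auto
  ultimately show "height_count S ?x' (y - 1) = height_count S x (y - 1) + card D"
    unfolding height_count_def by (metis card_Un_disjoint fin(2,3))
  show "height_count S ?x' z = height_count S x z" if "z \<noteq> y" "z \<noteq> y - 1"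
  proof -
    have "{a \<in> S. ?x' a \<le> z} = {a \<in> S. x a \<le> z}"
      using assms(5) that by (auto simp: move_heights_def)
    then show ?thesis
      unfolding height_count_def by simp
  qed
  have "{a \<in> S. x a \<le> y - 1} \<inter> U = {}" "({a \<in> S. x a \<le> y - 1} \<union> U) \<inter> D = {}"
    using assms(4-6) by auto
  then have "card {a \<in> S. x a \<le> y - 1} + card U + card D = card ({a \<in> S. x a \<le> y - 1} \<union> U \<union> D)"
    using fin by (simp add: card_Un_disjoint)
  also have "\<dots> \<le> card {a \<in> S. x a \<le> y}"
    using assms(1-3,5) by (intro card_mono) auto
  finally show "height_count S x (y - 1) + card U + card D \<le> height_count S x y"
    unfolding height_count_def .
qed

lemma height_potential_move_interior:
  assumes "finite S" "U \<subseteq> S" "D \<subseteq> S" "U \<inter> D = {}" "card U = card D"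
    and "\<forall>a \<in> U \<union> D. x a = y" "0 < y" "y < l" "0 < s"
  shows "height_potential l S s (move_heights U D y x) \<le> height_potential l S s x + s"
proof -
  let ?x' = "move_heights U D y x"
  define w :: "nat \<Rightarrow> real" where "w v = real v * (real v - 1)" for v
  define q where "q = real (card U)"
  define a where "a = real (height_count S x y)"
  define b where "b = real (height_count S x (y - 1))"
  note count = height_count_move_interior[OF assms(1-4,6,7)]
  have fin: "finite U" "finite D"
    using assms(1-3) finite_subset by auto
  have "(\<Sum>i\<in>S. w (?x' i)) - (\<Sum>i\<in>S. w (x i)) = (\<Sum>i\<in>U \<union> D. w (?x' i) - w (x i))"
    unfolding sum_subtractf[symmetric]
    using assms(1-3) by (intro sum.mono_neutral_right) (auto simp: move_heights_def)
  also have "\<dots> = (\<Sum>i\<in>U. w (?x' i) - w (x i)) + (\<Sum>i\<in>D. w (?x' i) - w (x i))"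
    using assms(4) fin by (simp add: sum.union_disjoint)
  also have "\<dots> = (\<Sum>i\<in>U. w (Suc y) - w y) + (\<Sum>i\<in>D. w (y - 1) - w y)"
    using assms(4,6) by (intro arg_cong2[where f = "(+)"] sum.cong) (auto simp: move_heights_def)
  also have "\<dots> = 2 * q"
    using assms(5,7) by (simp add: w_def q_def of_nat_diff algebra_simps)
  finally have weights: "(\<Sum>i\<in>S. w (?x' i)) = (\<Sum>i\<in>S. w (x i)) + 2 * q"
    by simp
  have "(\<Sum>z<l. real (height_count S ?x' z) ^ 2) - (\<Sum>z<l. real (height_count S x z) ^ 2)
      = (\<Sum>z\<in>{y - 1, y}. real (height_count S ?x' z) ^ 2 - real (height_count S x z) ^ 2)"
    unfolding sum_subtractf[symmetric]
    using assms(8) count(3) by (intro sum.mono_neutral_right) auto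
  also have "\<dots> = ((b + q)\<^sup>2 - b\<^sup>2) + ((a - q)\<^sup>2 - a\<^sup>2)"
    using assms(5,7) count(1,2,4) by (simp add: a_def b_def q_def of_nat_diff)
  finally have counts: "(\<Sum>z<l. real (height_count S ?x' z) ^ 2)
      = (\<Sum>z<l. real (height_count S x z) ^ 2) + (((b + q)\<^sup>2 - b\<^sup>2) + ((a - q)\<^sup>2 - a\<^sup>2))"
    by simp
  have "b + 2 * q \<le> a"
    using count(4) assms(5) unfolding a_def b_def q_def by linarith
  then have "q * (2 * q) \<le> q * (a - b)"
    by (intro mult_left_mono) (auto simp: q_def)
  txt \<open>The counts lose at least \<open>2 q\<^sup>2\<close>, and \<open>2 q \<le> s + q\<^sup>2 / s\<close> by AM-GM.\<close>
  then have "((b + q)\<^sup>2 - b\<^sup>2) + ((a - q)\<^sup>2 - a\<^sup>2) \<le> 2 * s * (s - 2 * q)"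
    using sum_squares_ge_zero[of "s - q" 0] by (simp add: power2_eq_square algebra_simps)
  then have "(((b + q)\<^sup>2 - b\<^sup>2) + ((a - q)\<^sup>2 - a\<^sup>2)) / (2 * s) \<le> s - 2 * q"
    using assms(9) by (simp add: pos_divide_le_eq mult.commute)
  then show ?thesis
    unfolding height_potential_def w_def[symmetric] weights counts
    by (simp add: add_divide_distrib)
qed

lemma height_potential_move:
  assumes "finite S" "U \<subseteq> S" "D \<subseteq> S" "U \<inter> D = {}" "card U = card D"
    and "\<forall>a \<in> U \<union> D. x a = y" "y < l" "0 < s"
  shows "height_potential l S s (move_heights U D y x) \<le> height_potential l S s x + s"
proof (cases "y = 0")
  case True
  then show ?thesis
    using height_potential_move_bottom[of S s U D x l] assms by simp
next
  case False
  then show ?thesis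
    using height_potential_move_interior assms by blast
qed

lemma band_potential_step:
  assumes "cup_step_at l n k' f g" "0 < s" "finite S" "\<forall>i<n. j * l \<le> f i \<longrightarrow> i \<in> S"
  shows "height_potential l S s (band_height l j g)
    \<le> height_potential l S s (band_height l j f) + s * of_bool (j * l \<le> k' \<and> k' < Suc j * l)"
proof (cases "j * l \<le> k' \<and> k' < Suc j * l")
  case True
  then obtain U D where UD: "U \<subseteq> {i. i < n \<and> f i = k'}" "D \<subseteq> {i. i < n \<and> f i = k'}"
      "U \<inter> D = {}" "card U = card D"
    and moved: "band_height l j g = move_heights U D (k' - j * l) (band_height l j f)"
    by (auto elim: band_height_step_in_band[OF assms(1)])
  have "U \<subseteq> S" "D \<subseteq> S"
    using UD(1,2) assms(4) True by auto
  moreover have "\<forall>a \<in> U \<union> D. band_height l j f a = k' - j * l"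
    using UD(1,2) True by (auto simp: band_height_def)
  moreover have "k' - j * l < l"
    using True by (simp add: less_diff_conv2)
  ultimately show ?thesis
    unfolding moved using height_potential_move[OF assms(3) _ _ UD(3,4) _ _ assms(2)] True by simp
next
  case False
  then show ?thesis
    using band_height_step_off_band[OF assms(1) False] False by auto
qed

lemma band_potential_play:
  fixes j :: nat
  assumes "cup_play l n T fs" "\<forall>t<T. cup_step_at l n (K t) (fs t) (fs (Suc t))" "0 < s" "t \<le> T"
  defines "S \<equiv> {i. i < n \<and> j * l \<le> fs T i}"
  shows "height_potential l S s (band_height l j (fs t))
    \<le> real l * real (card S) ^ 2 / (2 * s) + s * (\<Sum>t'<t. of_bool (j * l \<le> K t' \<and> K t' < Suc j * l))"
  using assms(4)
proof (induction t)
  case 0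
  have "band_height l j (fs 0) = (\<lambda>_. 0)"
    using assms(1) by (simp add: cup_play_def band_height_def fun_eq_iff)
  then show ?case
    by (simp add: height_potential_def height_count_def)
next
  case (Suc t)
  have "\<forall>i<n. j * l \<le> fs t i \<longrightarrow> i \<in> S"
    unfolding S_def using cup_play_multiple_le[OF assms(1), of t T j] Suc.prems by simp
  moreover have "cup_step_at l n (K t) (fs t) (fs (Suc t))"
    using assms(2) Suc.prems by simp
  ultimately have "height_potential l S s (band_height l j (fs (Suc t)))
      \<le> height_potential l S s (band_height l j (fs t)) + s * of_bool (j * l \<le> K t \<and> K t < Suc j * l)"
    using band_potential_step assms(3) unfolding S_def by simp
  then show ?case
    using Suc by (simp add: algebra_simps)
qed

lemma of_nat_times_pred_nonneg: "0 \<le> real v * (real v - 1)"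
  by (cases v) auto

lemma band_inequality:
  assumes "cup_play l n T fs" "\<forall>t<T. cup_step_at l n (K t) (fs t) (fs (Suc t))" "0 < s"
  defines "A \<equiv> \<lambda>j. real (card {i. i < n \<and> j * l \<le> fs T i})"
  shows "A (Suc j) * real l ^ 2
    \<le> A j * real l + real l * A j ^ 2 / (2 * s) + s * (\<Sum>t<T. of_bool (j * l \<le> K t \<and> K t < Suc j * l))"
proof -
  define S where "S = {i. i < n \<and> j * l \<le> fs T i}"
  define S' where "S' = {i. i < n \<and> Suc j * l \<le> fs T i}"
  let ?x = "band_height l j (fs T)"
  have "S' \<subseteq> S" "finite S"
    unfolding S_def S'_def by auto
  have "A (Suc j) * real l ^ 2 - A j * real l \<le> (\<Sum>a\<in>S'. real l * (real l - 1))"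
    using card_mono[OF \<open>finite S\<close> \<open>S' \<subseteq> S\<close>] unfolding A_def S_def[symmetric] S'_def[symmetric]
    by (simp add: power2_eq_square algebra_simps mult_left_mono)
  also have "\<dots> = (\<Sum>a\<in>S'. real (?x a) * (real (?x a) - 1))"
    unfolding S'_def by (intro sum.cong) (auto simp: band_height_def)
  also have "\<dots> \<le> (\<Sum>a\<in>S. real (?x a) * (real (?x a) - 1))"
    using \<open>finite S\<close> \<open>S' \<subseteq> S\<close> by (intro sum_mono2) (auto simp: of_nat_times_pred_nonneg)
  also have "\<dots> \<le> height_potential l S s ?x"
    unfolding height_potential_def using assms(3) by (simp add: sum_nonneg)
  also have "\<dots> \<le> real l * A j ^ 2 / (2 * s) + s * (\<Sum>t<T. of_bool (j * l \<le> K t \<and> K t < Suc j * l))"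
    using band_potential_play[OF assms(1-3) order_refl] unfolding A_def S_def by simp
  finally show ?thesis
    by simp
qed

lemma band_growth_bound:
  fixes a a' r L \<rho> :: real
  assumes "0 \<le> a" "a' \<le> a" "0 < \<rho>" "2 \<le> \<rho> * L" "0 \<le> r"
    and bound: "\<And>s. 0 < s \<Longrightarrow> a' * L\<^sup>2 \<le> a * L + L * a\<^sup>2 / (2 * s) + s * r"
  shows "a' \<le> a * \<rho> * exp (r / (\<rho>\<^sup>2 * L ^ 3))"
proof (cases "a = 0")
  case True
  then show ?thesis
    using assms(2) by simp
next
  case False
  define E where "E = \<rho>\<^sup>2 * L ^ 3"
  have "0 < L"
    using assms(3,4) zero_less_mult_pos[of \<rho> L] by linarith
  have "0 < a"
    using assms(1) False by simp
  define s where "s = a / (\<rho> * L)"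
  have "0 < s"
    unfolding s_def using \<open>0 < a\<close> \<open>0 < L\<close> assms(3) by simp
  have "L * a\<^sup>2 / (2 * s) = a * \<rho> * L\<^sup>2 / 2" "s * r = a * \<rho> * L\<^sup>2 * (r / E)"
    unfolding s_def E_def using \<open>0 < a\<close> \<open>0 < L\<close> assms(3)
    by (simp_all add: field_simps power2_eq_square power3_eq_cube)
  moreover have "a * L * 2 \<le> a * L * (\<rho> * L)"
    using assms(4) \<open>0 < a\<close> \<open>0 < L\<close> by (intro mult_left_mono) auto
  ultimately have "a' * L\<^sup>2 \<le> (a * \<rho> * (1 + r / E)) * L\<^sup>2"
    using bound[OF \<open>0 < s\<close>] by (simp add: power2_eq_square algebra_simps)
  then have "a' \<le> a * \<rho> * (1 + r / E)"
    using \<open>0 < L\<close> by simp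
  also have "\<dots> \<le> a * \<rho> * exp (r / E)"
    using \<open>0 < a\<close> assms(3) exp_ge_add_one_self[of "r / E"] by (intro mult_left_mono) auto
  finally show ?thesis
    unfolding E_def .
qed

lemma sum_of_bool_bands_le_1: "(\<Sum>j<h. of_bool (j * l \<le> k \<and> k < Suc j * l) :: real) \<le> 1"
proof -
  have "k div l = j" if "j * l \<le> k" "k < Suc j * l" for j
    using div_nat_eqI[of l j k] that by (simp add: mult.commute)
  then have "{..<h} \<inter> {j. j * l \<le> k \<and> k < Suc j * l} \<subseteq> {k div l}"
    by auto
  then have "card ({..<h} \<inter> {j. j * l \<le> k \<and> k < Suc j * l}) \<le> 1"
    using card_mono[of "{k div l}"] by fastforce
  then show ?thesis
    by simp
qed

lemma cup_play_high_cups_le: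
  assumes "cup_play l n T fs" "0 < \<rho>" "2 \<le> \<rho> * real l"
  shows "real (card {i. i < n \<and> h * l \<le> fs T i}) \<le> real n * \<rho> ^ h * exp (real T / (\<rho>\<^sup>2 * real l ^ 3))"
proof -
  obtain K where K: "\<forall>t<T. cup_step_at l n (K t) (fs t) (fs (Suc t))"
    using cup_play_step[OF assms(1)] by metis
  define A where "A j = real (card {i. i < n \<and> j * l \<le> fs T i})" for j
  define R where "R j = (\<Sum>t<T. of_bool (j * l \<le> K t \<and> K t < Suc j * l) :: real)" for j
  define E where "E = \<rho>\<^sup>2 * real l ^ 3"
  have "0 < real l"
    using assms(2,3) zero_less_mult_pos[of \<rho> "real l"] by linarith
  then have "0 < E"
    unfolding E_def using assms(2) by simp
  have growth: "A (Suc j) \<le> A j * \<rho> * exp (R j / E)" for j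
  proof (rule band_growth_bound[OF _ _ assms(2,3), folded E_def])
    show "A (Suc j) \<le> A j"
      unfolding A_def by (intro of_nat_mono card_mono) auto
    show "A (Suc j) * (real l)\<^sup>2 \<le> A j * real l + real l * (A j)\<^sup>2 / (2 * s) + s * R j" if "0 < s" for s
      using band_inequality[OF assms(1) K that] unfolding A_def R_def by simp
  qed (auto simp: A_def R_def sum_nonneg)
  have iterated: "A j \<le> real n * \<rho> ^ j * exp ((\<Sum>i<j. R i) / E)" for j
  proof (induction j)
    case 0
    then show ?case
      by (simp add: A_def)
  next
    case (Suc j)
    have "A (Suc j) \<le> A j * (\<rho> * exp (R j / E))"
      using growth[of j] by (simp add: mult.assoc)
    also have "\<dots> \<le> (real n * \<rho> ^ j * exp ((\<Sum>i<j. R i) / E)) * (\<rho> * exp (R j / E))"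
      using Suc assms(2) by (intro mult_right_mono) auto
    also have "\<dots> = real n * \<rho> ^ Suc j * exp ((\<Sum>i<Suc j. R i) / E)"
      by (simp add: add_divide_distrib exp_add algebra_simps)
    finally show ?case .
  qed
  have "(\<Sum>i<h. R i) = (\<Sum>t<T. \<Sum>i<h. of_bool (i * l \<le> K t \<and> K t < Suc i * l) :: real)"
    unfolding R_def by (rule sum.swap)
  also have "\<dots> \<le> (\<Sum>t<T. 1)"
    by (intro sum_mono sum_of_bool_bands_le_1)
  finally have "(\<Sum>i<h. R i) \<le> real T"
    by simp
  have "A h \<le> real n * \<rho> ^ h * exp ((\<Sum>i<h. R i) / E)"
    by (rule iterated)
  also have "\<dots> \<le> real n * \<rho> ^ h * exp (real T / E)"
    using \<open>(\<Sum>i<h. R i) \<le> real T\<close> \<open>0 < E\<close> assms(2) by (intro mult_left_mono) (auto simp: divide_right_mono)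
  finally show ?thesis
    unfolding A_def E_def .
qed

lemma le_mult_exp_of_ln_le:
  fixes n k h \<alpha> :: real
  assumes "0 < \<alpha>" "0 < k" "0 \<le> n" "\<alpha> * ln (n / k + 1) \<le> h"
  shows "n \<le> k * exp (h / \<alpha>)"
proof -
  have "0 < n / k + 1"
    using assms(2,3) by (simp add: add_nonneg_pos)
  moreover have "ln (n / k + 1) \<le> h / \<alpha>"
    using assms(1,4) by (simp add: field_simps mult.commute)
  ultimately have "n / k + 1 \<le> exp (h / \<alpha>)"
    by (metis exp_le_cancel_iff exp_ln)
  then show ?thesis
    using assms(2) by (simp add: field_simps)
qed

lemma cup_play_rounds_lower_bound:
  assumes "cup_play l n T fs" "0 < \<alpha>" "0 < k" "k \<le> card {i. i < n \<and> h * l \<le> fs T i}"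
    and "real n \<le> real k * exp (real h / \<alpha>)"
  shows "exp (- 1 / \<alpha> - 1) ^ 2 / 4 * real h * real l ^ 3 \<le> real T"
proof -
  define \<rho> where "\<rho> = exp (- 1 / \<alpha> - 1)"
  have "0 < \<rho>"
    unfolding \<rho>_def by simp
  show ?thesis
  proof (cases "2 \<le> \<rho> * real l")
    case True
    define E where "E = \<rho>\<^sup>2 * real l ^ 3"
    have "0 < E"
      unfolding E_def using True \<open>0 < \<rho>\<close> zero_less_mult_pos[of \<rho> "real l"] by simp
    txt \<open>\<open>\<rho> ^ h\<close> cancels the factor \<open>exp (h / \<alpha>)\<close> and leaves \<open>exp (- h)\<close>.\<close>
    have "\<rho> ^ h = exp (- (real h / \<alpha>) - real h)"
      unfolding \<rho>_def by (simp add: exp_of_nat_mult[symmetric] field_simps)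
    have "real k \<le> real n * \<rho> ^ h * exp (real T / E)"
      using cup_play_high_cups_le[OF assms(1) \<open>0 < \<rho>\<close> True, of h] assms(4) unfolding E_def by linarith
    also have "\<dots> \<le> real k * exp (real h / \<alpha>) * \<rho> ^ h * exp (real T / E)"
      using assms(5) \<open>0 < \<rho>\<close> by (intro mult_right_mono) auto
    also have "\<dots> = real k * exp (real T / E - real h)"
      unfolding \<open>\<rho> ^ h = _\<close> by (simp add: exp_add[symmetric] exp_diff)
    finally have "real h \<le> real T / E"
      using assms(3) by simp
    then have "\<rho>\<^sup>2 * real h * real l ^ 3 \<le> real T"
      using \<open>0 < E\<close> unfolding E_def by (simp add: field_simps)
    then show ?thesis
      unfolding \<rho>_def[symmetric] by (simp add: mult_left_le_imp_le)
  next
    case False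
    obtain i where "h * l \<le> fs T i"
      using assms(3,4) by (metis (mono_tags, lifting) Collect_empty_eq card.empty not_le)
    then have "real h * real l \<le> real T"
      using cup_play_fill_le[OF assms(1) order_refl, of i] by (simp flip: of_nat_mult)
    have "(\<rho> * real l)\<^sup>2 \<le> 2\<^sup>2"
      using False \<open>0 < \<rho>\<close> by (intro power_mono) auto
    have "\<rho>\<^sup>2 / 4 * real h * real l ^ 3 = (\<rho> * real l)\<^sup>2 / 4 * (real h * real l)"
      by (simp add: power2_eq_square power3_eq_cube)
    also have "\<dots> \<le> 1 * (real h * real l)"
      using \<open>(\<rho> * real l)\<^sup>2 \<le> 2\<^sup>2\<close> by (intro mult_right_mono) auto
    also have "\<dots> \<le> real T"
      using \<open>real h * real l \<le> real T\<close> by simp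
    finally show ?thesis
      unfolding \<rho>_def .
  qed
qed

theorem lemma6p4:
  fixes \<alpha> \<beta> :: real
  assumes "0 < \<alpha>" and "\<alpha> \<le> \<beta>"
  shows "\<exists>c>0. \<forall>n k h T fs.
           0 < k \<longrightarrow> k \<le> n \<longrightarrow>
           \<alpha> * ln (real n / real k + 1) \<le> real h \<longrightarrow>
           real h \<le> \<beta> * ln (real n / real k + 1) \<longrightarrow>
           h \<ge> 2 \<longrightarrow> h dvd k \<longrightarrow>
           cup_play (k div h) n T fs \<longrightarrow>
           card {i. i < n \<and> fs T i \<ge> h * (k div h)} \<ge> k \<longrightarrow>
           real T \<ge> c * real h * real (k div h) ^ 3"
proof (intro exI[of _ "exp (- 1 / \<alpha> - 1) ^ 2 / 4"] conjI allI impI)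
  txt \<open>Only the lower bound on \<open>h\<close> is needed: neither \<open>\<beta>\<close>, \<open>k \<le> n\<close>, \<open>h \<ge> 2\<close> nor
    \<open>h dvd k\<close> enters the argument.\<close>
  fix n k h T fs
  assume k: "0 < k" and h: "\<alpha> * ln (real n / real k + 1) \<le> real h"
    and play: "cup_play (k div h) n T fs" and high: "k \<le> card {i. i < n \<and> h * (k div h) \<le> fs T i}"
  have "real n \<le> real k * exp (real h / \<alpha>)"
    using le_mult_exp_of_ln_le[OF assms(1) _ _ h] k by simp
  with play assms(1) k high show "exp (- 1 / \<alpha> - 1) ^ 2 / 4 * real h * real (k div h) ^ 3 \<le> real T"
    by (rule cup_play_rounds_lower_bound)
qed simp

end
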